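(* Let $\rho\in(-1,1)$, $\Sigma=\begin{pmatrix}1&\rho\\ \rho&1\end{pmatrix}$, let $X=(X_1,X_2)$ and $Y=(Y_1,Y_2)$ be independent with $X,Y\sim\mathrm{N}(0,\Sigma)$, and let $Z_1=X_1/Y_1$, $Z_2=X_2/Y_2$. Writing $a=(1+z_1^2)(1+z_2^2)$ and $b=1+z_1z_2$, the joint density of $(Z_1,Z_2)$ is $$f^\rho_{Z_1,Z_2}(z_1,z_2)=\frac{1-\rho^2}{\pi^2}\,\frac{1}{a-\rho^2b^2}+\frac{1-\rho^2}{\pi^2}\,\frac{\rho\, b}{(a-\rho^2 b^2)^{3/2}}\,\sin^{-1}\!\Big(\frac{\rho\, b}{\sqrt{1+z_1^2}\,\sqrt{1+z_2^2}}\Big).$$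
   Context: $\mathrm{N}(0,\Sigma)$ denotes the centered bivariate normal distribution with covariance matrix $\Sigma$; $\sin^{-1}$ is the principal branch of arcsine. *)

theory Defs
  imports "HOL-Probability.Probability"
begin

text \<open>Density of the centered bivariate normal distribution N(0, Sigma) with
  Sigma = [[1, rho], [rho, 1]], |rho| < 1 (so Sigma is nonsingular):
  f(x,y) = 1/(2 pi sqrt(det Sigma)) * exp(-(1/2) (x,y) Sigma^-1 (x,y)^T).\<close>
definition binormal_density :: "real \<Rightarrow> real \<times> real \<Rightarrow> real" where
  "binormal_density \<rho> p =
     (let x = fst p; y = snd p in
      1 / (2 * pi * sqrt (1 - \<rho>\<^sup>2)) *
      exp (- (x\<^sup>2 - 2 * \<rho> * x * y + y\<^sup>2) / (2 * (1 - \<rho>\<^sup>2))))"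

definition ratio_density :: "real \<Rightarrow> real \<times> real \<Rightarrow> real" where
  "ratio_density \<rho> z =
     (let z1 = fst z; z2 = snd z;
          a = (1 + z1\<^sup>2) * (1 + z2\<^sup>2); b = 1 + z1 * z2 in
      (1 - \<rho>\<^sup>2) / pi\<^sup>2 * (1 / (a - \<rho>\<^sup>2 * b\<^sup>2))
      + (1 - \<rho>\<^sup>2) / pi\<^sup>2 * (\<rho> * b / (a - \<rho>\<^sup>2 * b\<^sup>2) powr (3/2))
        * arcsin (\<rho> * b / (sqrt (1 + z1\<^sup>2) * sqrt (1 + z2\<^sup>2))))"

end

theory Submission
  imports Defs "HOL-Real_Asymp.Real_Asymp"
begin

text \<open>Integrating out the denominator, the substitution \<open>x = (y1 z1, y2 z2)\<close> shows that
  \<open>(X1/Y1, X2/Y2)\<close> has density \<open>\<integral>\<integral> |y1 y2| \<phi>(y1 z1, y2 z2) \<phi>(y1, y2) dy\<close>, where \<open>\<phi>\<close> is the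
  bivariate normal density. The product of the two Gaussian factors is a centred Gaussian kernel
  \<open>exp (-(\<alpha> y1\<^sup>2 - 2 \<beta> y1 y2 + \<gamma> y2\<^sup>2)/2)\<close> with \<open>\<alpha> = (1 + z1\<^sup>2)/(1 - \<rho>\<^sup>2)\<close>,
  \<open>\<beta> = \<rho> (1 + z1 z2)/(1 - \<rho>\<^sup>2)\<close>, \<open>\<gamma> = (1 + z2\<^sup>2)/(1 - \<rho>\<^sup>2)\<close>. Substituting \<open>y2 = t y1\<close> and
  integrating out \<open>y1\<close> (a third absolute Gaussian moment) leaves
  \<open>4 \<integral> |t| / (\<gamma> t\<^sup>2 - 2 \<beta> t + \<alpha>)\<^sup>2 dt\<close>, which has an elementary antiderivative involving
  \<open>arctan\<close>. Finally \<open>1 - \<rho>\<^sup>2 b\<^sup>2/a = (a - \<rho>\<^sup>2 b\<^sup>2)/a\<close> turns that \<open>arctan\<close> into the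
  \<open>arcsin\<close> of the statement.\<close>

section \<open>Some integrals on the real line\<close>

lemma nn_integral_lborel_split_at_0:
  fixes f :: "real \<Rightarrow> real"
  assumes [measurable]: "f \<in> borel_measurable borel" and "f 0 = 0"
  shows "(\<integral>\<^sup>+x. ennreal (f x) \<partial>lborel) =
     (\<integral>\<^sup>+x. ennreal (f x) * indicator {0..} x \<partial>lborel) +
     (\<integral>\<^sup>+x. ennreal (f (-x)) * indicator {0..} x \<partial>lborel)"
proof -
  have "(\<integral>\<^sup>+x. ennreal (f x) \<partial>lborel) =
     (\<integral>\<^sup>+x. ennreal (f x) * indicator {0..} x + ennreal (f x) * indicator {..0} x \<partial>lborel)"
    by (intro nn_integral_cong) (auto simp: \<open>f 0 = 0\<close> split: split_indicator)
  also have "\<dots> = (\<integral>\<^sup>+x. ennreal (f x) * indicator {0..} x \<partial>lborel) +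
      (\<integral>\<^sup>+x. ennreal (f x) * indicator {..0} x \<partial>lborel)"
    by (rule nn_integral_add) auto
  also have "(\<integral>\<^sup>+x. ennreal (f x) * indicator {..0} x \<partial>lborel) =
      (\<integral>\<^sup>+x. ennreal (f (-x)) * indicator {0..} x \<partial>lborel)"
    by (subst nn_integral_real_affine[where c="-1" and t=0])
      (auto intro!: nn_integral_cong split: split_indicator)
  finally show ?thesis .
qed

lemma nn_integral_abs_cube_gaussian:
  fixes c :: real
  assumes "c > 0"
  shows "(\<integral>\<^sup>+x. ennreal (\<bar>x\<bar>^3 * exp (-(c*x^2)/2)) \<partial>lborel) = ennreal (4 / c^2)"
proof -
  let ?F = "\<lambda>y::real. -(y^2/c + 2/c^2) * exp (-(c*y^2)/2)"
  have half: "(\<integral>\<^sup>+x. ennreal (\<bar>s*x\<bar>^3 * exp (-(c*(s*x)^2)/2)) * indicator {0..} x \<partial>lborel)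
      = ennreal (2 / c^2)" if "\<bar>s\<bar> = 1" for s :: real
  proof -
    have "(\<integral>\<^sup>+x. ennreal (\<bar>s*x\<bar>^3 * exp (-(c*(s*x)^2)/2)) * indicator {0..} x \<partial>lborel)
        = (\<integral>\<^sup>+x. ennreal (x^3 * exp (-(c*x^2)/2)) * indicator {0..} x \<partial>lborel)"
      using that power2_abs[of s]
      by (intro nn_integral_cong) (auto simp: abs_mult power_mult_distrib split: split_indicator)
    also have "\<dots> = ennreal (0 - ?F 0)"
    proof (rule nn_integral_FTC_atLeast)
      show "(?F \<longlongrightarrow> 0) at_top"
        using \<open>c > 0\<close> by real_asymp
      fix x :: real
      show "(?F has_real_derivative x^3 * exp (-(c*x^2)/2)) (at x)"
        using \<open>c > 0\<close> by (auto intro!: derivative_eq_intros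
            simp: field_simps power2_eq_square power3_eq_cube)
    qed auto
    finally show ?thesis
      using \<open>c > 0\<close> by simp
  qed
  have "(\<integral>\<^sup>+x. ennreal (\<bar>x\<bar>^3 * exp (-(c*x^2)/2)) \<partial>lborel) = ennreal (2 / c^2) + ennreal (2 / c^2)"
    using half[of 1] half[of "-1"]
    by (subst nn_integral_lborel_split_at_0) auto
  also have "\<dots> = ennreal (4 / c^2)"
    using \<open>c > 0\<close> by (simp flip: ennreal_plus)
  finally show ?thesis .
qed

lemma DERIV_nonneg_imp_le_limit:
  fixes F f :: "real \<Rightarrow> real"
  assumes "\<And>x. a \<le> x \<Longrightarrow> DERIV F x :> f x" and "\<And>x. a \<le> x \<Longrightarrow> 0 \<le> f x"
    and "(F \<longlongrightarrow> T) at_top"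
  shows "F a \<le> T"
proof (rule tendsto_lowerbound[OF \<open>(F \<longlongrightarrow> T) at_top\<close>])
  have "F a \<le> F x" if "a \<le> x" for x
    using assms that by (intro DERIV_nonneg_imp_nondecreasing[of a x F]) (auto intro: order_trans)
  then show "\<forall>\<^sub>F x in at_top. F a \<le> F x"
    by (auto simp: eventually_at_top_linorder)
qed simp

lemma quadratic_pos:
  fixes a b g t :: real
  assumes "g > 0" and "a*g - b^2 > 0"
  shows "g*t^2 - 2*b*t + a > 0"
proof -
  have "g*(g*t^2 - 2*b*t + a) = (g*t - b)^2 + (a*g - b^2)"
    by (simp add: power2_eq_square algebra_simps)
  then have "g*(g*t^2 - 2*b*t + a) > 0"
    using assms by (smt (verit) zero_le_power2)
  then show ?thesis
    using \<open>g > 0\<close> by (simp add: zero_less_mult_iff)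
qed

lemma rational_antiderivative:
  fixes a b g x :: real
  assumes "g > 0" and "a*g - b^2 > 0"
  defines "D \<equiv> a*g - b^2"
  shows "((\<lambda>t. (b*t - a) / (2*D*(g*t^2 - 2*b*t + a)) + b / (2*D * sqrt D) * arctan ((g*t - b) / sqrt D))
      has_real_derivative x / (g*x^2 - 2*b*x + a)^2) (at x)"
proof -
  let ?p = "\<lambda>t. g*t^2 - 2*b*t + a"
  have D: "D > 0" "sqrt D > 0" "sqrt D * sqrt D = D"
    using assms by auto
  have p: "?p x > 0"
    using quadratic_pos assms by blast
  have arctan_arg: "1 + ((g*x - b) / sqrt D)^2 = g * ?p x / D"
    using D by (simp add: field_simps power2_eq_square D_def)
  have numerator: "(b*x - a) * ((2*x*g - 2*b) * (2*D)) = (2*b*(g*(x*x) - 2*b*x + a) - 2*D*x) * (2*D)"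
    by (simp add: D_def algebra_simps power2_eq_square)
  \<comment> \<open>stated for an arbitrary \<open>P \<noteq> 0\<close>: \<open>field_simps\<close> cannot see that the expanded quadratic is nonzero\<close>
  have quotient: "(b*(2*D*P) - (2*b*P - 2*D*x)*(2*D)) / (4*(D*(P*(D*P)))) + b/(2*(D*P)) = x/(P*P)"
    if "P \<noteq> 0" for P
    using D that by (simp add: field_simps)
  show ?thesis
    using D p arctan_arg \<open>g > 0\<close>
    by (auto intro!: derivative_eq_intros simp: power2_eq_square) (simp only: numerator quotient)
qed

lemma nn_integral_rational_halfline:
  fixes a b g :: real
  assumes "g > 0" and "a*g - b^2 > 0"
  defines "D \<equiv> a*g - b^2"
  defines "I \<equiv> 1/(2*D) + b/(2*D * sqrt D) * (pi/2 + arctan (b / sqrt D))"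
  shows "(\<integral>\<^sup>+t. ennreal (t / (g*t^2 - 2*b*t + a)^2) * indicator {0..} t \<partial>lborel) = ennreal I"
    and "0 \<le> I"
proof -
  let ?F = "\<lambda>t. (b*t - a) / (2*D*(g*t^2 - 2*b*t + a)) + b / (2*D * sqrt D) * arctan ((g*t - b) / sqrt D)"
  have D: "D > 0"
    using assms by simp
  have F': "(?F has_real_derivative t / (g*t^2 - 2*b*t + a)^2) (at t)" for t
    using assms(1,2) unfolding D_def by (rule rational_antiderivative)
  have F_lim: "(?F \<longlongrightarrow> b/(2*D * sqrt D) * (pi/2)) at_top"
  proof -
    have "(?F \<longlongrightarrow> b * pi / (4 * (D * root 2 D))) at_top"
      using D \<open>g > 0\<close> by real_asymp
    then show ?thesis
      by (simp add: sqrt_def)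
  qed
  have nonneg: "0 \<le> t / (g*t^2 - 2*b*t + a)^2" if "0 \<le> t" for t
    using that by simp
  have "a > 0"
    using assms by (smt (verit) mult_nonpos_nonneg zero_le_power2)
  then have I_eq: "b/(2*D * sqrt D) * (pi/2) - ?F 0 = I"
    using D by (simp add: I_def field_simps arctan_minus)
  show "(\<integral>\<^sup>+t. ennreal (t / (g*t^2 - 2*b*t + a)^2) * indicator {0..} t \<partial>lborel) = ennreal I"
    unfolding I_eq[symmetric] by (rule nn_integral_FTC_atLeast[OF _ F' nonneg F_lim]) measurable
  show "0 \<le> I"
    using DERIV_nonneg_imp_le_limit[where a=0, OF F' nonneg F_lim] I_eq by simp
qed

lemma nn_integral_abs_rational:
  fixes a b g :: real
  assumes "g > 0" and "a*g - b^2 > 0"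
  defines "D \<equiv> a*g - b^2"
  shows "(\<integral>\<^sup>+t. ennreal (\<bar>t\<bar> / (g*t^2 - 2*b*t + a)^2) \<partial>lborel)
     = ennreal (1/D + b/(D * sqrt D) * arctan (b / sqrt D))"
proof -
  define I where "I c = 1/(2*D) + c/(2*D * sqrt D) * (pi/2 + arctan (c / sqrt D))" for c
  have half: "(\<integral>\<^sup>+t. ennreal (\<bar>s*t\<bar> / (g*(s*t)^2 - 2*b*(s*t) + a)^2) * indicator {0..} t \<partial>lborel)
      = ennreal (I (s*b))" "0 \<le> I (s*b)" if "\<bar>s\<bar> = 1" for s
  proof -
    have s: "s^2 = 1" "s * s = 1"
      using that power2_abs[of s] by (auto simp: power2_eq_square)
    have disc: "a*g - (s*b)^2 > 0"
      using assms s by (simp add: power_mult_distrib)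
    have "(\<integral>\<^sup>+t. ennreal (\<bar>s*t\<bar> / (g*(s*t)^2 - 2*b*(s*t) + a)^2) * indicator {0..} t \<partial>lborel)
        = (\<integral>\<^sup>+t. ennreal (t / (g*t^2 - 2*(s*b)*t + a)^2) * indicator {0..} t \<partial>lborel)"
      using that s
      by (intro nn_integral_cong) (auto simp: abs_mult power_mult_distrib mult_ac split: split_indicator)
    then show "(\<integral>\<^sup>+t. ennreal (\<bar>s*t\<bar> / (g*(s*t)^2 - 2*b*(s*t) + a)^2) * indicator {0..} t \<partial>lborel)
        = ennreal (I (s*b))" "0 \<le> I (s*b)"
      using nn_integral_rational_halfline[OF \<open>g > 0\<close> disc] s by (simp_all add: I_def D_def power_mult_distrib)
  qed
  have "(\<integral>\<^sup>+t. ennreal (\<bar>t\<bar> / (g*t^2 - 2*b*t + a)^2) \<partial>lborel) = ennreal (I b) + ennreal (I (-b))"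
    using half[of 1] half[of "-1"] by (subst nn_integral_lborel_split_at_0) auto
  also have "\<dots> = ennreal (I b + I (-b))"
    using half(2)[of 1] half(2)[of "-1"] by (simp flip: ennreal_plus)
  also have "I b + I (-b) = 1/D + b/(D * sqrt D) * arctan (b / sqrt D)"
    using assms(2) by (simp add: I_def field_simps arctan_minus flip: D_def)
  finally show ?thesis .
qed

lemma nn_integral_abs_product_gaussian:
  fixes a b g :: real
  assumes "g > 0" and "a*g - b^2 > 0"
  defines "D \<equiv> a*g - b^2"
  shows "(\<integral>\<^sup>+y1. \<integral>\<^sup>+y2. ennreal (\<bar>y1*y2\<bar> * exp (-(a*y1^2 - 2*b*y1*y2 + g*y2^2)/2)) \<partial>lborel \<partial>lborel)
     = ennreal (4 * (1/D + b/(D * sqrt D) * arctan (b / sqrt D)))"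
proof -
  let ?p = "\<lambda>t. g*t^2 - 2*b*t + a"
  let ?G = "\<lambda>y1 t. ennreal (\<bar>t\<bar> * (\<bar>y1\<bar>^3 * exp (-(?p t * y1^2)/2)))"
  have inner: "(\<integral>\<^sup>+y2. ennreal (\<bar>y1*y2\<bar> * exp (-(a*y1^2 - 2*b*y1*y2 + g*y2^2)/2)) \<partial>lborel)
      = (\<integral>\<^sup>+t. ?G y1 t \<partial>lborel)" for y1
  proof (cases "y1 = 0")
    case False
    have "(\<integral>\<^sup>+y2. ennreal (\<bar>y1*y2\<bar> * exp (-(a*y1^2 - 2*b*y1*y2 + g*y2^2)/2)) \<partial>lborel)
       = \<bar>y1\<bar> * (\<integral>\<^sup>+t. ennreal (\<bar>y1*(0 + y1*t)\<bar> * exp (-(a*y1^2 - 2*b*y1*(0 + y1*t) + g*(0 + y1*t)^2)/2)) \<partial>lborel)"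
      by (rule nn_integral_real_affine[OF _ False]) measurable
    also have "\<dots> = (\<integral>\<^sup>+t. ennreal \<bar>y1\<bar> * ennreal (\<bar>y1*(y1*t)\<bar> * exp (-(a*y1^2 - 2*b*y1*(y1*t) + g*(y1*t)^2)/2)) \<partial>lborel)"
      by (simp add: nn_integral_cmult)
    also have "\<dots> = (\<integral>\<^sup>+t. ?G y1 t \<partial>lborel)"
    proof (intro nn_integral_cong)
      fix t :: real
      have "\<bar>y1\<bar> * (\<bar>y1*(y1*t)\<bar> * exp (-(a*y1^2 - 2*b*y1*(y1*t) + g*(y1*t)^2)/2))
          = \<bar>t\<bar> * (\<bar>y1\<bar>^3 * exp (-(?p t * y1^2)/2))"
        by (simp add: abs_mult power2_eq_square power3_eq_cube algebra_simps)
      then show "ennreal \<bar>y1\<bar> * ennreal (\<bar>y1*(y1*t)\<bar> * exp (-(a*y1^2 - 2*b*y1*(y1*t) + g*(y1*t)^2)/2))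
          = ?G y1 t"
        by (simp add: ennreal_mult[symmetric])
    qed
    finally show ?thesis .
  qed simp
  have moment: "(\<integral>\<^sup>+y1. ?G y1 t \<partial>lborel) = ennreal 4 * ennreal (\<bar>t\<bar> / (?p t)^2)" for t
  proof -
    have "?p t > 0"
      using assms quadratic_pos by blast
    have factor: "?G y1 t = ennreal \<bar>t\<bar> * ennreal (\<bar>y1\<bar>^3 * exp (-(?p t * y1^2)/2))" for y1
      by (rule ennreal_mult') simp
    have "(\<integral>\<^sup>+y1. ?G y1 t \<partial>lborel) = ennreal \<bar>t\<bar> * (\<integral>\<^sup>+y1. ennreal (\<bar>y1\<bar>^3 * exp (-(?p t * y1^2)/2)) \<partial>lborel)"
      unfolding factor by (rule nn_integral_cmult) measurable
    also have "\<dots> = ennreal \<bar>t\<bar> * ennreal (4 / (?p t)^2)"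
      by (simp only: nn_integral_abs_cube_gaussian[OF \<open>?p t > 0\<close>])
    also have "\<dots> = ennreal 4 * ennreal (\<bar>t\<bar> / (?p t)^2)"
      by (simp add: numeral_mult_ennreal ennreal_mult'[symmetric] mult.commute)
    finally show ?thesis .
  qed
  have "(\<integral>\<^sup>+y1. \<integral>\<^sup>+y2. ennreal (\<bar>y1*y2\<bar> * exp (-(a*y1^2 - 2*b*y1*y2 + g*y2^2)/2)) \<partial>lborel \<partial>lborel)
     = (\<integral>\<^sup>+t. \<integral>\<^sup>+y1. ?G y1 t \<partial>lborel \<partial>lborel)"
    unfolding inner by (rule lborel_pair.Fubini') measurable
  also have "\<dots> = ennreal 4 * (\<integral>\<^sup>+t. ennreal (\<bar>t\<bar> / (?p t)^2) \<partial>lborel)"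
    unfolding moment by (rule nn_integral_cmult) measurable
  also have "\<dots> = ennreal 4 * ennreal (1/D + b/(D * sqrt D) * arctan (b / sqrt D))"
    using nn_integral_abs_rational[OF assms(1,2)] by (simp only: D_def)
  also have "\<dots> = ennreal (4 * (1/D + b/(D * sqrt D) * arctan (b / sqrt D)))"
    by (rule ennreal_mult'[symmetric]) simp
  finally show ?thesis .
qed

section \<open>Density of a componentwise quotient\<close>

lemma sigma_finite_lborel_pair: "sigma_finite_measure (lborel \<Otimes>\<^sub>M lborel :: (real \<times> real) measure)"
  by (rule sigma_finite_pair_measure) (rule lborel.sigma_finite_measure_axioms)+

lemma AE_lborel_pair_nonzero: "AE y in lborel \<Otimes>\<^sub>M lborel. fst y \<noteq> 0 \<and> snd y \<noteq> (0::real)"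
proof (rule lborel_pair.AE_pair_measure)
  show "AE x in lborel. AE y in lborel. fst (x, y) \<noteq> 0 \<and> snd (x, y) \<noteq> (0::real)"
    using AE_lborel_singleton[of 0] by eventually_elim (use AE_lborel_singleton[of 0] in auto)
qed measurable

lemma nn_integral_lborel_pair_scale:
  fixes f :: "real \<times> real \<Rightarrow> ennreal"
  assumes [measurable]: "f \<in> borel_measurable (lborel \<Otimes>\<^sub>M lborel)" and "c1 \<noteq> 0" and "c2 \<noteq> 0"
  shows "(\<integral>\<^sup>+x. f x \<partial>(lborel \<Otimes>\<^sub>M lborel))
     = ennreal \<bar>c1 * c2\<bar> * (\<integral>\<^sup>+z. f (c1 * fst z, c2 * snd z) \<partial>(lborel \<Otimes>\<^sub>M lborel))"
proof -
  have "(\<integral>\<^sup>+x. f x \<partial>(lborel \<Otimes>\<^sub>M lborel)) = (\<integral>\<^sup>+x1. \<integral>\<^sup>+x2. f (x1, x2) \<partial>lborel \<partial>lborel)"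
    by (rule lborel.nn_integral_fst[symmetric]) measurable
  also have "\<dots> = (\<integral>\<^sup>+x1. ennreal \<bar>c2\<bar> * \<integral>\<^sup>+z2. f (x1, 0 + c2 * z2) \<partial>lborel \<partial>lborel)"
    by (intro nn_integral_cong nn_integral_real_affine \<open>c2 \<noteq> 0\<close>) measurable
  also have "\<dots> = ennreal \<bar>c2\<bar> * (\<integral>\<^sup>+x1. \<integral>\<^sup>+z2. f (x1, c2 * z2) \<partial>lborel \<partial>lborel)"
    by (subst nn_integral_cmult) (simp_all, measurable)
  also have "(\<integral>\<^sup>+x1. \<integral>\<^sup>+z2. f (x1, c2 * z2) \<partial>lborel \<partial>lborel)
      = ennreal \<bar>c1\<bar> * (\<integral>\<^sup>+z1. \<integral>\<^sup>+z2. f (0 + c1 * z1, c2 * z2) \<partial>lborel \<partial>lborel)"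
    by (rule nn_integral_real_affine[OF _ \<open>c1 \<noteq> 0\<close>]) measurable
  also have "(\<integral>\<^sup>+z1. \<integral>\<^sup>+z2. f (0 + c1 * z1, c2 * z2) \<partial>lborel \<partial>lborel)
      = (\<integral>\<^sup>+z. f (c1 * fst z, c2 * snd z) \<partial>(lborel \<Otimes>\<^sub>M lborel))"
    by (simp, rule lborel.nn_integral_fst[where f="\<lambda>z. f (c1 * fst z, c2 * snd z)", simplified]) measurable
  finally show ?thesis
    by (simp add: abs_mult ennreal_mult ac_simps)
qed

definition quotient_density ::
    "((real \<times> real) \<times> (real \<times> real) \<Rightarrow> ennreal) \<Rightarrow> real \<times> real \<Rightarrow> ennreal" where
  "quotient_density h z =
     (\<integral>\<^sup>+y. ennreal \<bar>fst y * snd y\<bar> * h ((fst y * fst z, snd y * snd z), y) \<partial>(lborel \<Otimes>\<^sub>M lborel))"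

lemma nn_integral_quotient:
  fixes h :: "(real \<times> real) \<times> (real \<times> real) \<Rightarrow> ennreal"
  assumes [measurable]: "h \<in> borel_measurable ((lborel \<Otimes>\<^sub>M lborel) \<Otimes>\<^sub>M (lborel \<Otimes>\<^sub>M lborel))"
    and [measurable]: "A \<in> sets (lborel \<Otimes>\<^sub>M lborel)"
  shows "(\<integral>\<^sup>+p. h p * indicator A (fst (fst p) / fst (snd p), snd (fst p) / snd (snd p))
            \<partial>((lborel \<Otimes>\<^sub>M lborel) \<Otimes>\<^sub>M (lborel \<Otimes>\<^sub>M lborel)))
       = (\<integral>\<^sup>+z. quotient_density h z * indicator A z \<partial>(lborel \<Otimes>\<^sub>M lborel))"
proof -
  let ?N = "lborel \<Otimes>\<^sub>M lborel :: (real \<times> real) measure"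
  interpret N: sigma_finite_measure ?N
    by (rule sigma_finite_lborel_pair)
  interpret NN: pair_sigma_finite ?N ?N ..
  let ?H = "\<lambda>x y. h (x, y) * indicator A (fst x / fst y, snd x / snd y)"
  let ?K = "\<lambda>y z. ennreal \<bar>fst y * snd y\<bar> * h ((fst y * fst z, snd y * snd z), y) * indicator A z"
  have "(\<integral>\<^sup>+p. h p * indicator A (fst (fst p) / fst (snd p), snd (fst p) / snd (snd p)) \<partial>(?N \<Otimes>\<^sub>M ?N))
      = (\<integral>\<^sup>+y. \<integral>\<^sup>+x. ?H x y \<partial>?N \<partial>?N)"
    by (rule NN.nn_integral_snd[symmetric, where f="\<lambda>p. ?H (fst p) (snd p)", simplified]) measurable
  also have "\<dots> = (\<integral>\<^sup>+y. \<integral>\<^sup>+z. ?K y z \<partial>?N \<partial>?N)"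
  proof (rule nn_integral_cong_AE)
    show "AE y in ?N. (\<integral>\<^sup>+x. ?H x y \<partial>?N) = (\<integral>\<^sup>+z. ?K y z \<partial>?N)"
      using AE_lborel_pair_nonzero
    proof eventually_elim
      case (elim y)
      have "(\<integral>\<^sup>+x. ?H x y \<partial>?N) = ennreal \<bar>fst y * snd y\<bar> * (\<integral>\<^sup>+z. ?H (fst y * fst z, snd y * snd z) y \<partial>?N)"
        by (rule nn_integral_lborel_pair_scale) (measurable, simp_all add: elim space_pair_measure)
      also have "\<dots> = ennreal \<bar>fst y * snd y\<bar> * (\<integral>\<^sup>+z. h ((fst y * fst z, snd y * snd z), y) * indicator A z \<partial>?N)"
        using elim by simp
      also have "\<dots> = (\<integral>\<^sup>+z. ?K y z \<partial>?N)"
        by (subst nn_integral_cmult[symmetric]) (measurable, auto simp: mult.assoc space_pair_measure)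
      finally show ?case .
    qed
  qed
  also have "\<dots> = (\<integral>\<^sup>+z. \<integral>\<^sup>+y. ?K y z \<partial>?N \<partial>?N)"
    by (rule NN.Fubini') measurable
  also have "\<dots> = (\<integral>\<^sup>+z. quotient_density h z * indicator A z \<partial>?N)"
    unfolding quotient_density_def by (intro nn_integral_cong nn_integral_multc) measurable
  finally show ?thesis .
qed

lemma borel_measurable_quotient_density:
  assumes "h \<in> borel_measurable ((lborel \<Otimes>\<^sub>M lborel) \<Otimes>\<^sub>M (lborel \<Otimes>\<^sub>M lborel))"
  shows "quotient_density h \<in> borel_measurable (lborel \<Otimes>\<^sub>M lborel)"
proof -
  interpret N: sigma_finite_measure "lborel \<Otimes>\<^sub>M lborel :: (real \<times> real) measure"
    by (rule sigma_finite_lborel_pair)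
  show ?thesis
    using assms unfolding quotient_density_def by measurable
qed

lemma distributed_quotient:
  fixes X Y :: "'a \<Rightarrow> real \<times> real"
  assumes XY: "distributed M ((lborel \<Otimes>\<^sub>M lborel) \<Otimes>\<^sub>M (lborel \<Otimes>\<^sub>M lborel)) (\<lambda>\<omega>. (X \<omega>, Y \<omega>)) h"
  shows "distributed M (lborel \<Otimes>\<^sub>M lborel)
           (\<lambda>\<omega>. (fst (X \<omega>) / fst (Y \<omega>), snd (X \<omega>) / snd (Y \<omega>))) (quotient_density h)"
proof -
  let ?N = "lborel \<Otimes>\<^sub>M lborel :: (real \<times> real) measure"
  let ?Z = "\<lambda>\<omega>. (fst (X \<omega>) / fst (Y \<omega>), snd (X \<omega>) / snd (Y \<omega>))"
  define q where "q p = (fst (fst p) / fst (snd p), snd (fst p) / snd (snd p))"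
    for p :: "(real \<times> real) \<times> (real \<times> real)"
  note h = distributed_borel_measurable[OF XY]
  note XY_measurable = distributed_measurable[OF XY]
  have q_measurable[measurable]: "q \<in> measurable (?N \<Otimes>\<^sub>M ?N) ?N"
    unfolding q_def by measurable
  have Z: "?Z = q \<circ> (\<lambda>\<omega>. (X \<omega>, Y \<omega>))"
    by (simp add: q_def o_def)
  have Z_measurable: "?Z \<in> measurable M ?N"
    unfolding Z using XY_measurable q_measurable by (rule measurable_comp)
  have "distr M ?N ?Z = density ?N (quotient_density h)"
  proof (rule measure_eqI)
    fix A assume "A \<in> sets (distr M ?N ?Z)"
    then have A[measurable]: "A \<in> sets ?N" by simp
    have "emeasure (distr M ?N ?Z) A
        = emeasure M ((\<lambda>\<omega>. (X \<omega>, Y \<omega>)) -` (q -` A \<inter> space (?N \<Otimes>\<^sub>M ?N)) \<inter> space M)"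
      by (subst emeasure_distr[OF Z_measurable A])
        (auto simp: q_def space_pair_measure intro!: arg_cong[where f="emeasure M"])
    also have "\<dots> = (\<integral>\<^sup>+p. h p * indicator (q -` A \<inter> space (?N \<Otimes>\<^sub>M ?N)) p \<partial>(?N \<Otimes>\<^sub>M ?N))"
      by (rule distributed_emeasure[OF XY]) measurable
    also have "\<dots> = (\<integral>\<^sup>+p. h p * indicator A (q p) \<partial>(?N \<Otimes>\<^sub>M ?N))"
      by (intro nn_integral_cong) (auto simp: space_pair_measure split: split_indicator)
    also have "\<dots> = (\<integral>\<^sup>+z. quotient_density h z * indicator A z \<partial>?N)"
      unfolding q_def using h A by (rule nn_integral_quotient)
    also have "\<dots> = emeasure (density ?N (quotient_density h)) A"
      by (rule emeasure_density[OF borel_measurable_quotient_density[OF h] A, symmetric])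
    finally show "emeasure (distr M ?N ?Z) A = emeasure (density ?N (quotient_density h)) A" .
  qed simp
  then show ?thesis
    unfolding distributed_def using Z_measurable borel_measurable_quotient_density[OF h] by blast
qed

section \<open>Quotients of bivariate normal vectors\<close>

lemma binormal_density_nonneg:
  assumes "-1 < \<rho>" and "\<rho> < 1"
  shows "0 \<le> binormal_density \<rho> p"
proof -
  have "\<rho>^2 < 1"
    using assms by (simp add: abs_square_less_1)
  then show ?thesis
    by (simp add: binormal_density_def Let_def)
qed

lemma borel_measurable_binormal_density[measurable (raw)]:
  assumes [measurable]: "f \<in> borel_measurable M" "g \<in> borel_measurable M"
  shows "(\<lambda>x. binormal_density \<rho> (f x, g x)) \<in> borel_measurable M"
  unfolding binormal_density_def Let_def by simp

lemma borel_measurable_binormal_density_pair[measurable]: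
  "binormal_density \<rho> \<in> borel_measurable (lborel \<Otimes>\<^sub>M lborel)"
proof -
  have "binormal_density \<rho> = (\<lambda>p. binormal_density \<rho> (fst p, snd p))"
    by simp
  then show ?thesis
    by (subst \<open>binormal_density \<rho> = _\<close>) measurable
qed

lemma ratio_discriminant_pos:
  fixes \<rho> z1 z2 :: real
  assumes "-1 < \<rho>" and "\<rho> < 1"
  shows "(1 + z1^2) * (1 + z2^2) - \<rho>^2 * (1 + z1*z2)^2 > 0"
proof -
  have s: "1 - \<rho>^2 > 0"
    using assms by (simp add: abs_square_less_1)
  have eq: "(1 + z1^2) * (1 + z2^2) - \<rho>^2 * (1 + z1*z2)^2 = (z1 - z2)^2 + (1 - \<rho>^2) * (1 + z1*z2)^2"
    by (simp add: power2_eq_square algebra_simps)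
  show ?thesis
  proof (cases "z1 = z2")
    case True
    then have "1 + z1*z2 > 0"
      by (simp add: add_pos_nonneg)
    then show ?thesis
      unfolding eq using s True by simp
  next
    case False
    then show ?thesis
      unfolding eq using s by (simp add: add_pos_nonneg)
  qed
qed

lemma ratio_density_arctan:
  fixes \<rho> z1 z2 :: real
  assumes "-1 < \<rho>" and "\<rho> < 1"
  defines "b \<equiv> 1 + z1*z2"
  defines "E \<equiv> (1 + z1^2) * (1 + z2^2) - \<rho>^2 * b^2"
  shows "ratio_density \<rho> (z1, z2)
      = (1 - \<rho>^2) / pi^2 * (1/E + \<rho> * b / (E * sqrt E) * arctan (\<rho> * b / sqrt E))"
proof -
  define a where "a = (1 + z1^2) * (1 + z2^2)"
  have E: "E > 0"
    using ratio_discriminant_pos[OF assms(1,2)] by (simp add: E_def b_def)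
  have "a > 0"
    by (simp add: a_def add_pos_nonneg)
  have "E powr (3/2) = E powr (1 + 1/2)"
    by simp
  also have "\<dots> = E * sqrt E"
    using E by (subst powr_add) (simp add: powr_half_sqrt)
  finally have E_powr: "E powr (3/2) = E * sqrt E" .
  have arcsin_eq: "arcsin (\<rho> * b / (sqrt (1 + z1^2) * sqrt (1 + z2^2))) = arctan (\<rho> * b / sqrt E)"
  proof -
    define x where "x = \<rho> * b / sqrt a"
    have x: "1 - x^2 = E / a"
      using \<open>a > 0\<close> by (simp add: x_def E_def a_def field_simps power_divide)
    then have "x^2 < 1"
      using E \<open>a > 0\<close> by (smt (verit) divide_pos_pos)
    then have "arcsin x = arctan (x / sqrt (1 - x^2))"
      by (intro arcsin_arctan) (auto simp: abs_square_less_1 abs_less_iff)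
    also have "x / sqrt (1 - x^2) = \<rho> * b / sqrt E"
      unfolding x using E \<open>a > 0\<close> by (simp add: x_def real_sqrt_divide)
    finally show ?thesis
      by (simp add: x_def a_def real_sqrt_mult)
  qed
  show ?thesis
    unfolding ratio_density_def Let_def fst_conv snd_conv b_def[symmetric] E_def[symmetric] E_powr arcsin_eq
    by (simp add: distrib_left)
qed

lemma binormal_density_product:
  fixes \<rho> y1 y2 z1 z2 :: real
  assumes "-1 < \<rho>" and "\<rho> < 1"
  defines "s \<equiv> 1 - \<rho>^2"
  shows "binormal_density \<rho> (y1*z1, y2*z2) * binormal_density \<rho> (y1, y2)
      = 1 / (4 * pi^2 * s) * exp (-((1 + z1^2)/s * y1^2 - 2 * (\<rho> * (1 + z1*z2)/s) * y1*y2 + (1 + z2^2)/s * y2^2)/2)"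
proof -
  have "s > 0"
    using assms by (simp add: abs_square_less_1)
  then have "exp (- ((y1*z1)^2 - 2*\<rho>*(y1*z1)*(y2*z2) + (y2*z2)^2) / (2 * s)) * exp (- (y1^2 - 2*\<rho>*y1*y2 + y2^2) / (2 * s))
      = exp (-((1 + z1^2)/s * y1^2 - 2 * (\<rho> * (1 + z1*z2)/s) * y1*y2 + (1 + z2^2)/s * y2^2)/2)"
    unfolding exp_add[symmetric] by (intro arg_cong[where f=exp]) (simp add: field_simps power2_eq_square)
  with \<open>s > 0\<close> show ?thesis
    unfolding binormal_density_def Let_def fst_conv snd_conv s_def[symmetric]
    by (simp add: power2_eq_square field_simps)
qed

lemma quotient_density_binormal:
  fixes \<rho> :: real and z :: "real \<times> real"
  assumes "-1 < \<rho>" and "\<rho> < 1"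
  shows "quotient_density (\<lambda>(x, y). ennreal (binormal_density \<rho> x) * ennreal (binormal_density \<rho> y)) z
      = ennreal (ratio_density \<rho> z)"
proof -
  obtain z1 z2 where z: "z = (z1, z2)"
    by force
  define s where "s = 1 - \<rho>^2"
  define b where "b = 1 + z1*z2"
  define E where "E = (1 + z1^2) * (1 + z2^2) - \<rho>^2 * b^2"
  define \<alpha> \<beta> \<gamma> where "\<alpha> = (1 + z1^2)/s" and "\<beta> = \<rho> * b/s" and "\<gamma> = (1 + z2^2)/s"
  define k where "k = 1 / (4 * pi^2 * s)"
  define D where "D = \<alpha>*\<gamma> - \<beta>^2"
  have s: "s > 0"
    using assms by (simp add: s_def abs_square_less_1)
  have E: "E > 0"
    using ratio_discriminant_pos[OF assms] by (simp add: E_def b_def)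
  have D: "D = E / s^2"
    using s by (simp add: D_def E_def \<alpha>_def \<beta>_def \<gamma>_def field_simps power2_eq_square)
  have "\<gamma> > 0" and "D > 0"
    using s E by (simp_all add: \<gamma>_def D add_pos_nonneg)
  have integrand: "ennreal \<bar>y1 * y2\<bar> * (ennreal (binormal_density \<rho> (y1*z1, y2*z2)) * ennreal (binormal_density \<rho> (y1, y2)))
      = ennreal k * ennreal (\<bar>y1*y2\<bar> * exp (-(\<alpha>*y1^2 - 2*\<beta>*y1*y2 + \<gamma>*y2^2)/2))" for y1 y2
    using binormal_density_product[OF assms, of y1 z1 y2 z2] binormal_density_nonneg[OF assms] s
    by (simp add: k_def \<alpha>_def \<beta>_def \<gamma>_def s_def b_def mult_ac flip: ennreal_mult)
  have "quotient_density (\<lambda>(x, y). ennreal (binormal_density \<rho> x) * ennreal (binormal_density \<rho> y)) z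
      = (\<integral>\<^sup>+y1. \<integral>\<^sup>+y2. ennreal k * ennreal (\<bar>y1*y2\<bar> * exp (-(\<alpha>*y1^2 - 2*\<beta>*y1*y2 + \<gamma>*y2^2)/2)) \<partial>lborel \<partial>lborel)"
    unfolding quotient_density_def z integrand[symmetric]
    by (subst lborel.nn_integral_fst[symmetric]) (simp_all, measurable)
  also have "\<dots> = ennreal k * ennreal (4 * (1/D + \<beta>/(D * sqrt D) * arctan (\<beta> / sqrt D)))"
    using nn_integral_abs_product_gaussian[OF \<open>\<gamma> > 0\<close>, of \<alpha> \<beta>] \<open>D > 0\<close>
    by (simp add: nn_integral_cmult D_def)
  also have "\<dots> = ennreal (ratio_density \<rho> z)"
  proof -
    have sqrt_D: "sqrt D = sqrt E / s"
      using s by (simp add: D real_sqrt_divide)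
    then have "\<beta> / sqrt D = \<rho> * b / sqrt E"
      using s by (simp add: \<beta>_def)
    then have "k * (4 * (1/D + \<beta>/(D * sqrt D) * arctan (\<beta> / sqrt D)))
        = s / pi^2 * (1/E + \<rho> * b / (E * sqrt E) * arctan (\<rho> * b / sqrt E))"
      unfolding sqrt_D using s E by (simp add: D k_def \<beta>_def field_simps power2_eq_square)
    also have "\<dots> = ratio_density \<rho> z"
      using ratio_density_arctan[OF assms, of z1 z2] by (simp add: z b_def E_def s_def)
    finally show ?thesis
      using s by (simp add: k_def flip: ennreal_mult')
  qed
  finally show ?thesis .
qed

theorem mainTheorem4:
  fixes M :: "'a measure" and \<rho> :: real
    and X1 X2 Y1 Y2 :: "'a \<Rightarrow> real"
  assumes "prob_space M"
    and "-1 < \<rho>" and "\<rho> < 1"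
    and "distributed M (lborel \<Otimes>\<^sub>M lborel) (\<lambda>\<omega>. (X1 \<omega>, X2 \<omega>))
           (\<lambda>p. ennreal (binormal_density \<rho> p))"
    and "distributed M (lborel \<Otimes>\<^sub>M lborel) (\<lambda>\<omega>. (Y1 \<omega>, Y2 \<omega>))
           (\<lambda>p. ennreal (binormal_density \<rho> p))"
    and "prob_space.indep_var M (lborel \<Otimes>\<^sub>M lborel) (\<lambda>\<omega>. (X1 \<omega>, X2 \<omega>))
           (lborel \<Otimes>\<^sub>M lborel) (\<lambda>\<omega>. (Y1 \<omega>, Y2 \<omega>))"
  shows "distributed M (lborel \<Otimes>\<^sub>M lborel) (\<lambda>\<omega>. (X1 \<omega> / Y1 \<omega>, X2 \<omega> / Y2 \<omega>))
           (\<lambda>z. ennreal (ratio_density \<rho> z))"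
proof -
  interpret prob_space M
    by fact
  have "distributed M ((lborel \<Otimes>\<^sub>M lborel) \<Otimes>\<^sub>M (lborel \<Otimes>\<^sub>M lborel))
      (\<lambda>\<omega>. ((X1 \<omega>, X2 \<omega>), (Y1 \<omega>, Y2 \<omega>)))
      (\<lambda>(x, y). ennreal (binormal_density \<rho> x) * ennreal (binormal_density \<rho> y))"
    using sigma_finite_lborel_pair sigma_finite_lborel_pair assms(4-6) by (rule distributed_joint_indep)
  from distributed_quotient[OF this]
  have "distributed M (lborel \<Otimes>\<^sub>M lborel) (\<lambda>\<omega>. (X1 \<omega> / Y1 \<omega>, X2 \<omega> / Y2 \<omega>))
      (quotient_density (\<lambda>(x, y). ennreal (binormal_density \<rho> x) * ennreal (binormal_density \<rho> y)))"
    by simp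
  moreover have "quotient_density (\<lambda>(x, y). ennreal (binormal_density \<rho> x) * ennreal (binormal_density \<rho> y))
      = (\<lambda>z. ennreal (ratio_density \<rho> z))"
    using quotient_density_binormal[OF assms(2,3)] by (rule ext)
  ultimately show ?thesis
    by simp
qed

end
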